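(* Fix $0<d<1$ and let $c(x)=x^d$. For every positive integer $h$ there exists a game with $n=h^2+h$ jobs and cost function $c$, and a Nash equilibrium $s$ of that game, such that $\frac{C(s)}{C(s^* )}=\Omega\!\left(h^{1-d}\right)=\Omega\!\left(n^{(1-d)/2}\right)$, where $s^*$ is an optimal assignment of that game.
   Context: A game is specified by a cost function $c$ (here $c(x)=x^d$, $c(0)=0$), a time horizon $T$ with slots $t=1,\dots,T$, and a set of jobs, each job $j$ having integer release time $r_j$ and integer deadline $d_j$ with $0<r_j<d_j<T$. An assignment $s$ gives each job $j$ a slot $s_j$ with $r_j\le s_j<d_j$. The load of slot $t$ is $l_t(s)=|\{j:s_j=t\}|$ and $C(s)=\sum_{t=1}^T c(l_t(s))$. An assignment $s$ is a Nash equilibrium if for every job $j$ and every slot $t\neq s_j$ with $r_j\le t<d_j$: $\frac{c(l_{s_j}(s))}{l_{s_j}(s)}\le\frac{c(l_t(s)+1)}{l_t(s)+1}$. An optimal assignment is one minimizing $C$ over all assignments. *)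

theory Defs
  imports Complex_Main
begin

definition cst :: "real \<Rightarrow> nat \<Rightarrow> real" where
  "cst d x = (if x = 0 then 0 else (real x) powr d)"

definition valid_game :: "nat \<Rightarrow> nat \<Rightarrow> (nat \<Rightarrow> nat) \<Rightarrow> (nat \<Rightarrow> nat) \<Rightarrow> bool" where
  "valid_game T n r dl = (\<forall>j<n. 0 < r j \<and> r j < dl j \<and> dl j < T)"

definition is_assignment :: "nat \<Rightarrow> (nat \<Rightarrow> nat) \<Rightarrow> (nat \<Rightarrow> nat) \<Rightarrow> (nat \<Rightarrow> nat) \<Rightarrow> bool" where
  "is_assignment n r dl s = (\<forall>j<n. r j \<le> s j \<and> s j < dl j)"

definition load :: "nat \<Rightarrow> (nat \<Rightarrow> nat) \<Rightarrow> nat \<Rightarrow> nat" where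
  "load n s t = card {j. j < n \<and> s j = t}"

definition total_cost :: "real \<Rightarrow> nat \<Rightarrow> nat \<Rightarrow> (nat \<Rightarrow> nat) \<Rightarrow> real" where
  "total_cost d T n s = (\<Sum>t = 1..T. cst d (load n s t))"

definition is_nash :: "real \<Rightarrow> nat \<Rightarrow> (nat \<Rightarrow> nat) \<Rightarrow> (nat \<Rightarrow> nat) \<Rightarrow> (nat \<Rightarrow> nat) \<Rightarrow> bool" where
  "is_nash d n r dl s = (is_assignment n r dl s \<and>
     (\<forall>j<n. \<forall>t. t \<noteq> s j \<and> r j \<le> t \<and> t < dl j \<longrightarrow>
        cst d (load n s (s j)) / real (load n s (s j))
          \<le> cst d (load n s t + 1) / real (load n s t + 1)))"

definition is_optimal :: "real \<Rightarrow> nat \<Rightarrow> nat \<Rightarrow> (nat \<Rightarrow> nat) \<Rightarrow> (nat \<Rightarrow> nat) \<Rightarrow> (nat \<Rightarrow> nat) \<Rightarrow> bool" where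
  "is_optimal d T n r dl s = (is_assignment n r dl s \<and>
     (\<forall>s'. is_assignment n r dl s' \<longrightarrow> total_cost d T n s \<le> total_cost d T n s'))"

end

theory Submission
  imports Defs
begin

text \<open>Split the jobs into blocks: block \<open>k\<close> (for \<open>1 \<le> k \<le> h\<close>) consists of \<open>2k\<close> jobs that
  may use the slots \<open>1, \<dots>, k + 1\<close>. Putting each block on its last slot is a Nash equilibrium,
  because slot \<open>t \<le> k\<close> carries only \<open>2(t - 1) < 2k\<close> jobs and the per-job cost \<open>x\<^sup>d / x\<close>
  decreases in \<open>x\<close>. Every slot of this equilibrium carries at most \<open>2h\<close> jobs, so its cost
  is at least \<open>n (2h)\<^bsup>d-1\<^esup>\<close>, whereas putting all \<open>n = h\<^sup>2 + h\<close> jobs on slot 1 costs only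
  \<open>n\<^sup>d\<close>, which is optimal by concavity. The ratio is
  \<open>(2h)\<^bsup>d-1\<^esup> n\<^bsup>1-d\<^esup> \<ge> 2\<^bsup>d-1\<^esup> h\<^bsup>1-d\<^esup>\<close>.\<close>

lemma cst_div_eq: "0 < l \<Longrightarrow> cst d l / real l = real l powr (d - 1)"
  by (simp add: cst_def powr_diff)

lemma cst_div_antimono:
  assumes "d \<le> 1" "0 < l" "l \<le> l'"
  shows "cst d l' / real l' \<le> cst d l / real l"
  using assms by (simp add: cst_div_eq powr_mono2')

lemma cst_ge_linear:
  assumes "d \<le> 1" "l \<le> M" "0 < M"
  shows "real M powr (d - 1) * real l \<le> cst d l"
proof (cases "l = 0")
  case False
  then have "real M powr (d - 1) * real l \<le> cst d l / real l * real l"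
    using assms by (intro mult_right_mono) (simp_all add: cst_div_eq powr_mono2')
  then show ?thesis using False by simp
qed (simp add: cst_def)

lemma load_le: "load n s t \<le> n"
  unfolding load_def by (rule order.trans[OF card_mono[of "{..<n}"]]) auto

lemma load_eq_0_iff: "load n s t = 0 \<longleftrightarrow> (\<forall>j<n. s j \<noteq> t)"
  by (auto simp: load_def)

lemma sum_load:
  assumes "\<forall>j<n. s j \<in> A" "finite A"
  shows "(\<Sum>t\<in>A. load n s t) = n"
proof -
  have "(\<Sum>t\<in>A. load n s t) = card (\<Union>t\<in>A. {j. j < n \<and> s j = t})"
    unfolding load_def by (rule card_UN_disjoint[symmetric]) (auto simp: assms)
  also have "(\<Union>t\<in>A. {j. j < n \<and> s j = t}) = {..<n}" using assms by auto
  finally show ?thesis by simp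
qed

lemma assignment_in_horizon:
  assumes "valid_game T n r dl" "is_assignment n r dl s" "j < n"
  shows "s j \<in> {1..T}"
proof -
  have "0 < r j" "r j \<le> s j" "s j < dl j" "dl j < T"
    using assms unfolding valid_game_def is_assignment_def by auto
  then show ?thesis by simp
qed

lemma total_cost_ge:
  assumes "d \<le> 1" "\<forall>j<n. s j \<in> {1..T}" "\<forall>j<n. load n s (s j) \<le> M" "0 < M"
  shows "real M powr (d - 1) * real n \<le> total_cost d T n s"
proof -
  have "real M powr (d - 1) * real (load n s t) \<le> cst d (load n s t)" for t
  proof (cases "load n s t = 0")
    case False
    then obtain j where "j < n" "s j = t" by (auto simp: load_eq_0_iff)
    then show ?thesis using assms cst_ge_linear by auto
  qed (simp add: cst_def)
  then have "(\<Sum>t=1..T. real M powr (d - 1) * real (load n s t)) \<le> total_cost d T n s"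
    unfolding total_cost_def by (intro sum_mono)
  moreover have "(\<Sum>t=1..T. real (load n s t)) = real n"
    using sum_load[OF assms(2)] by (metis finite_atLeastAtMost of_nat_sum)
  ultimately show ?thesis by (simp add: sum_distrib_left[symmetric])
qed

lemma total_cost_ge_cst:
  assumes "d \<le> 1" "\<forall>j<n. s j \<in> {1..T}"
  shows "cst d n \<le> total_cost d T n s"
proof (cases "n = 0")
  case True
  then have "load n s t = 0" for t by (simp add: load_eq_0_iff)
  then show ?thesis using True by (simp add: total_cost_def cst_def)
next
  case False
  then have "real n powr (d - 1) * real n \<le> total_cost d T n s"
    using assms load_le by (intro total_cost_ge) auto
  then show ?thesis using False by (simp add: cst_def powr_diff)
qed

lemma total_cost_const:
  assumes "t\<^sub>0 \<in> {1..T}"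
  shows "total_cost d T n (\<lambda>_. t\<^sub>0) = cst d n"
proof -
  have "total_cost d T n (\<lambda>_. t\<^sub>0) = (\<Sum>t\<in>{1..T}. if t = t\<^sub>0 then cst d n else 0)"
    unfolding total_cost_def load_def by (intro sum.cong) (auto simp: cst_def)
  also have "\<dots> = cst d n" using assms by simp
  finally show ?thesis .
qed

lemma const_assignment_is_optimal:
  assumes "d \<le> 1" "valid_game T n r dl" "is_assignment n r dl (\<lambda>_. t\<^sub>0)"
  shows "is_optimal d T n r dl (\<lambda>_. t\<^sub>0)"
proof (cases "n = 0")
  case True
  then show ?thesis using assms(3)
    by (auto simp: is_optimal_def total_cost_def load_def)
next
  case False
  then have "t\<^sub>0 \<in> {1..T}" using assignment_in_horizon[OF assms(2,3)] by blast
  moreover have "cst d n \<le> total_cost d T n s'" if "is_assignment n r dl s'" for s'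
    using assms(1) assignment_in_horizon[OF assms(2) that] by (intro total_cost_ge_cst) auto
  ultimately show ?thesis using assms(3) by (simp add: is_optimal_def total_cost_const)
qed

definition block :: "nat \<Rightarrow> nat" where
  "block j = (LEAST k. j < k * (k + 1))"

lemma block_bounds: "j < block j * (block j + 1)" "1 \<le> block j"
proof -
  show upper: "j < block j * (block j + 1)"
    unfolding block_def by (rule LeastI[of _ "j + 1"]) simp
  then show "1 \<le> block j" by (cases "block j") auto
qed

lemma block_le_iff: "block j \<le> h \<longleftrightarrow> j < h * (h + 1)"
proof
  assume "block j \<le> h"
  then have "block j * (block j + 1) \<le> h * (h + 1)" by (intro mult_le_mono) auto
  then show "j < h * (h + 1)" using block_bounds(1)[of j] by linarith
qed (simp add: block_def Least_le)

lemma block_eq_iff: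
  assumes "1 \<le> k"
  shows "block j = k \<longleftrightarrow> (k - 1) * k \<le> j \<and> j < k * (k + 1)"
proof -
  have "k - 1 + 1 = k" using assms by simp
  then have "block j \<le> k - 1 \<longleftrightarrow> j < (k - 1) * k" using block_le_iff[of j "k - 1"] by simp
  then show ?thesis using block_le_iff[of j k] by linarith
qed

lemma card_block: "1 \<le> k \<Longrightarrow> card {j. block j = k} = 2 * k"
proof -
  assume k: "1 \<le> k"
  have "{j. block j = k} = {(k - 1) * k..<k * (k + 1)}"
    using block_eq_iff[OF k] by (simp only: set_eq_iff mem_Collect_eq atLeastLessThan_iff simp_thms)
  then have "card {j. block j = k} = k * (k + 1) - (k - 1) * k" by (simp only: card_atLeastLessThan)
  also have "\<dots> = 2 * k" using k by (cases k) simp_all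
  finally show ?thesis .
qed

definition staircase :: "nat \<Rightarrow> nat" where
  "staircase j = block j + 1"

lemma load_staircase:
  assumes "n = h * (h + 1)"
  shows "load n staircase t = (if 2 \<le> t \<and> t \<le> h + 1 then 2 * (t - 1) else 0)"
proof (cases "2 \<le> t \<and> t \<le> h + 1")
  case True
  then have "{j. j < n \<and> staircase j = t} = {j. block j = t - 1}"
    using assms block_le_iff by (force simp: staircase_def)
  moreover have "1 \<le> t - 1" using True by arith
  ultimately show ?thesis using True card_block[of "t - 1"] by (simp add: load_def)
next
  case False
  have "staircase j \<noteq> t" if "j < n" for j
    using False block_bounds(2)[of j] block_le_iff[of j h] that assms by (auto simp: staircase_def)
  then show ?thesis unfolding if_not_P[OF False] by (simp add: load_eq_0_iff)
qed

lemma load_staircase_own: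
  assumes "n = h * (h + 1)" "j < n"
  shows "load n staircase (staircase j) = 2 * block j"
proof -
  have "block j \<le> h" using assms block_le_iff by simp
  then show ?thesis
    using block_bounds(2)[of j] unfolding load_staircase[OF assms(1)] by (simp add: staircase_def)
qed

lemma staircase_valid_game: "valid_game (h + 3) (h * (h + 1)) (\<lambda>_. 1) (\<lambda>j. block j + 2)"
  unfolding valid_game_def
proof (intro allI impI)
  fix j assume "j < h * (h + 1)"
  then have "block j \<le> h" by (simp add: block_le_iff)
  then show "(0::nat) < 1 \<and> 1 < block j + 2 \<and> block j + 2 < h + 3" by simp
qed

lemma staircase_is_nash:
  assumes "d \<le> 1" "n = h * (h + 1)"
  shows "is_nash d n (\<lambda>_. 1) (\<lambda>j. block j + 2) staircase"
  unfolding is_nash_def is_assignment_def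
proof (intro conjI allI impI)
  fix j t assume j: "j < n" and t: "t \<noteq> staircase j \<and> 1 \<le> t \<and> t < block j + 2"
  have "t \<le> block j" using t by (simp add: staircase_def)
  moreover have "load n staircase t \<le> 2 * (t - 1)" unfolding load_staircase[OF assms(2)] by simp
  ultimately have "load n staircase t + 1 \<le> 2 * block j" using t by arith
  then have "cst d (2 * block j) / real (2 * block j)
      \<le> cst d (load n staircase t + 1) / real (load n staircase t + 1)"
    by (intro cst_div_antimono[OF assms(1)]) simp_all
  then show "cst d (load n staircase (staircase j)) / real (load n staircase (staircase j))
      \<le> cst d (load n staircase t + 1) / real (load n staircase t + 1)"
    unfolding load_staircase_own[OF assms(2) j] .
qed (simp_all add: staircase_def)

lemma staircase_total_cost_ge:
  assumes "d \<le> 1" "1 \<le> h" "n = h * (h + 1)"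
  shows "real (2 * h) powr (d - 1) * real n \<le> total_cost d (h + 3) n staircase"
proof (rule total_cost_ge[OF assms(1)])
  have block_le: "block j \<le> h" if "j < n" for j using that assms(3) by (simp add: block_le_iff)
  show "\<forall>j<n. staircase j \<in> {1..h + 3}" by (auto simp: staircase_def dest: block_le)
  show "\<forall>j<n. load n staircase (staircase j) \<le> 2 * h"
    by (auto simp: load_staircase_own[OF assms(3)] dest: block_le)
qed (use assms(2) in simp)

lemma ratio_bound:
  fixes d N :: real
  assumes "d \<le> 1" "1 \<le> h" "real h ^ 2 \<le> N"
  shows "2 powr (d - 1) * real h powr (1 - d) \<le> real (2 * h) powr (d - 1) * N / N powr d"
proof -
  have h: "1 \<le> real h" using assms(2) by simp
  then have N: "0 < N" using assms(3) one_le_power[of "real h" 2] by linarith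
  have "real h ^ 2 = real h powr 2" using h by (simp add: powr_numeral)
  then have "(real h ^ 2) powr (1 - d) = real h powr (2 * (1 - d))" by (simp only: powr_powr)
  then have "real h powr (1 - d) = real h powr (d - 1) * (real h ^ 2) powr (1 - d)"
    using h by (simp add: powr_add[symmetric])
  also have "\<dots> \<le> real h powr (d - 1) * N powr (1 - d)"
    using assms by (intro mult_left_mono powr_mono2) auto
  also have "\<dots> = real h powr (d - 1) * (N / N powr d)"
    using N by (simp add: powr_diff)
  finally have "2 powr (d - 1) * real h powr (1 - d)
      \<le> 2 powr (d - 1) * (real h powr (d - 1) * (N / N powr d))"
    by (rule mult_left_mono) simp
  also have "\<dots> = real (2 * h) powr (d - 1) * N / N powr d"
    by (simp add: powr_mult)
  finally show ?thesis .
qed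

theorem lemma2:
  fixes d :: real
  assumes "0 < d" and "d < 1"
  shows "\<exists>K > 0. \<forall>h :: nat. h \<ge> 1 \<longrightarrow>
    (\<exists>T r dl s sopt. valid_game T (h^2 + h) r dl
       \<and> is_nash d (h^2 + h) r dl s
       \<and> is_optimal d T (h^2 + h) r dl sopt
       \<and> total_cost d T (h^2 + h) s / total_cost d T (h^2 + h) sopt
           \<ge> K * real h powr (1 - d))"
proof (intro exI[of _ "2 powr (d - 1)"] conjI allI impI)
  fix h :: nat assume h: "1 \<le> h"
  define n where "n = h^2 + h"
  have n: "n = h * (h + 1)" unfolding n_def by (simp add: power2_eq_square algebra_simps)
  let ?r = "\<lambda>_. 1" and ?dl = "\<lambda>j. block j + 2"
  have game: "valid_game (h + 3) n ?r ?dl" using staircase_valid_game n by simp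
  have nash: "is_nash d n ?r ?dl staircase" using staircase_is_nash assms n by simp
  have opt: "is_optimal d (h + 3) n ?r ?dl (\<lambda>_. 1)"
    using game assms by (intro const_assignment_is_optimal) (auto simp: is_assignment_def)
  have opt_cost: "total_cost d (h + 3) n (\<lambda>_. 1) = real n powr d"
    using h n by (simp add: total_cost_const cst_def)
  have "2 powr (d - 1) * real h powr (1 - d) \<le> real (2 * h) powr (d - 1) * real n / real n powr d"
    using assms h by (intro ratio_bound) (simp_all add: n_def)
  also have "\<dots> \<le> total_cost d (h + 3) n staircase / total_cost d (h + 3) n (\<lambda>_. 1)"
    unfolding opt_cost using staircase_total_cost_ge[OF _ h n] assms
    by (intro divide_right_mono) auto
  finally show "\<exists>T r dl s sopt. valid_game T (h^2 + h) r dl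
       \<and> is_nash d (h^2 + h) r dl s
       \<and> is_optimal d T (h^2 + h) r dl sopt
       \<and> total_cost d T (h^2 + h) s / total_cost d T (h^2 + h) sopt
           \<ge> 2 powr (d - 1) * real h powr (1 - d)"
    using game nash opt unfolding n_def by blast
qed simp

end
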